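(* Let $I=\{i_1<i_2<\cdots<i_{2r}\}\subseteq[n]$ be a subset of even size. Then the word \[ \prod_{m=1}^{r} s_n\,(s_{n-2}s_{n-3}\cdots s_{i_{2m-1}})\,(s_{n-1}s_{n-2}\cdots s_{i_{2m}}) \] (where a run $s_a s_{a-1}\cdots s_b$ is empty if $a<b$) is a reduced expression for the unique element $w\in W$ of minimal length among all $u\in W$ with $\{i\in[n]: u(i)>n\}=I$; this $w$ is the minimal length representative of its right coset $W_{[n-1]}w$. Moreover, this word is a subword of $s_{i'_1}s_{i'_2}\cdots s_{i'_N}$, where the $m$-th factor is taken from the $m$-th group of blocks of that word.
   Context: The Weyl group $W$ of $\mathrm{SO}(2n)$ is the group of permutations $\sigma$ of $[2n]$ such that for each $i\in[n]$, $\sigma(n+i)\equiv n+\sigma(i)\pmod{2n}$ (with values in $[2n]$), and $|\{i\in[n]:\sigma(i)>n\}|$ is even; composition is $(\sigma\tau)(j)=\sigma(\tau(j))$. It is generated by $s_i=(i,i+1)(n+i,n+i+1)$ for $1\le i\le n-1$ and $s_n=(n,2n-1)(n-1,2n)$; length is with respect to these generators. $W_{[n-1]}=\langle s_1,\dots,s_{n-1}\rangle$. For $N=\binom n2$, $(i'_1,\dots,i'_N)$ is the sequence obtained by concatenating, for $m=1,\dots,\lfloor n/2\rfloor$ (the $m$-th group), the blocks "$n$", "$n-2,n-3,\dots,2m-1$", "$n-1,n-2,\dots,2m$" (empty runs if start $<$ end); $s_{i'_1}\cdots s_{i'_N}$ is a reduced word for the minimal coset representative of the longest element. *)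

theory Defs
  imports "HOL-Combinatorics.Combinatorics" "HOL-Library.Sublist"
begin

text \<open>Weyl group of SO(2n): permutations of {1..2n} (identity outside) with
  sigma(n+i) = n + sigma(i) mod 2n (values in [2n]) and an even number of i in [n]
  with sigma(i) > n.\<close>
definition inW :: "nat \<Rightarrow> (nat \<Rightarrow> nat) \<Rightarrow> bool" where
  "inW n \<sigma> \<longleftrightarrow> \<sigma> permutes {1..2*n}
     \<and> (\<forall>i\<in>{1..n}. \<sigma> (n+i) = (if \<sigma> i \<le> n then \<sigma> i + n else \<sigma> i - n))
     \<and> even (card {i\<in>{1..n}. \<sigma> i > n})"

definition negset :: "nat \<Rightarrow> (nat \<Rightarrow> nat) \<Rightarrow> nat set" where
  "negset n u = {i\<in>{1..n}. u i > n}"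

definition gen :: "nat \<Rightarrow> nat \<Rightarrow> (nat \<Rightarrow> nat)" where
  "gen n i = (if i = n then transpose n (2*n-1) \<circ> transpose (n-1) (2*n)
              else transpose i (i+1) \<circ> transpose (n+i) (n+i+1))"

definition wordprod :: "nat \<Rightarrow> nat list \<Rightarrow> (nat \<Rightarrow> nat)" where
  "wordprod n xs = foldr (\<lambda>i acc. gen n i \<circ> acc) xs id"

definition is_word :: "nat \<Rightarrow> nat list \<Rightarrow> bool" where
  "is_word n xs \<longleftrightarrow> set xs \<subseteq> {1..n}"

definition wlen :: "nat \<Rightarrow> (nat \<Rightarrow> nat) \<Rightarrow> nat" where
  "wlen n w = (LEAST k. \<exists>xs. is_word n xs \<and> length xs = k \<and> wordprod n xs = w)"

definition reduced_expr :: "nat \<Rightarrow> nat list \<Rightarrow> (nat \<Rightarrow> nat) \<Rightarrow> bool" where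
  "reduced_expr n xs w \<longleftrightarrow> is_word n xs \<and> wordprod n xs = w \<and> length xs = wlen n w"

definition Wpar :: "nat \<Rightarrow> (nat \<Rightarrow> nat) set" where
  "Wpar n = {wordprod n xs | xs. set xs \<subseteq> {1..n-1}}"

definition rcoset :: "nat \<Rightarrow> (nat \<Rightarrow> nat) \<Rightarrow> (nat \<Rightarrow> nat) set" where
  "rcoset n w = {u \<circ> w | u. u \<in> Wpar n}"

definition run :: "nat \<Rightarrow> nat \<Rightarrow> nat list" where
  "run a b = rev [b..<Suc a]"

definition ielem :: "nat set \<Rightarrow> nat \<Rightarrow> nat" where
  "ielem I j = sorted_list_of_set I ! (j - 1)"

definition factorI :: "nat \<Rightarrow> nat set \<Rightarrow> nat \<Rightarrow> nat list" where
  "factorI n I m = [n] @ run (n-2) (ielem I (2*m-1)) @ run (n-1) (ielem I (2*m))"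

definition wordI :: "nat \<Rightarrow> nat set \<Rightarrow> nat list" where
  "wordI n I = concat (map (factorI n I) [1..<Suc (card I div 2)])"

definition groupL :: "nat \<Rightarrow> nat \<Rightarrow> nat list" where
  "groupL n m = [n] @ run (n-2) (2*m-1) @ run (n-1) (2*m)"

definition wordLong :: "nat \<Rightarrow> nat list" where
  "wordLong n = concat (map (groupL n) [1..<Suc (n div 2)])"

end

theory Submission
  imports Defs
begin

text \<open>Read an element u of W as a signed permutation of {1..n} and weigh each pair of positions
  j < k by 0, 1 or 2 according to the order of the absolute values of u j and u k and the sign of u j.
  A generator changes the weight of only one pair, the one carrying the two absolute values it
  swaps, and by at most one; so the total weight bounds the length from below, and since some
  generator lowers it at every u \<noteq> id, every element of W is a product of generators.
  The total weight is at least the sum of n - j over the negative positions j, with equality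
  exactly when every positive entry is smaller, and every negative entry larger, in absolute value
  than all later entries; such an element is determined by its negative positions.
  The product of the given word has negative positions I and its length equals that sum, so it
  is the unique minimiser, and the elements of its W_[n-1]-coset share its negative positions.
  The subword claims reduce to i_j \<ge> j.\<close>

text \<open>A point y \<in> {1..2n} encodes a signed integer of absolute value absval n y, negative
  iff n < y; antipode n is negation.\<close>

definition absval :: "nat \<Rightarrow> nat \<Rightarrow> nat" where
  "absval n y = (if y \<le> n then y else y - n)"

definition antipode :: "nat \<Rightarrow> nat \<Rightarrow> nat" where
  "antipode n y = (if y \<le> n then y + n else y - n)"

definition signed_perm :: "nat \<Rightarrow> (nat \<Rightarrow> nat) \<Rightarrow> bool" where
  "signed_perm n u \<longleftrightarrow> u permutes {1..2*n} \<and> (\<forall>i\<in>{1..n}. u (n+i) = antipode n (u i))"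

lemma inW_iff_signed_perm: "inW n u \<longleftrightarrow> signed_perm n u \<and> even (card (negset n u))"
  unfolding inW_def signed_perm_def negset_def antipode_def by auto

text \<open>On absolute values, s_i acts as the transposition of abs_swap n i and its successor;
  s_n also flips the signs of the points of absolute value n - 1 and n.\<close>

definition abs_swap :: "nat \<Rightarrow> nat \<Rightarrow> nat" where
  "abs_swap n i = (if i = n then n - 1 else i)"

lemma abs_swap_range: "2 \<le> n \<Longrightarrow> i \<in> {1..n} \<Longrightarrow> abs_swap n i \<in> {1..n-1}"
  by (auto simp: abs_swap_def)

lemma gen_apply_less:
  "2 \<le> n \<Longrightarrow> 1 \<le> i \<Longrightarrow> i < n \<Longrightarrow> gen n i y =
     (if y = i then i+1 else if y = i+1 then i else
      if y = n+i then n+i+1 else if y = n+i+1 then n+i else y)"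
  unfolding gen_def transpose_def by auto

lemma gen_apply_last:
  "2 \<le> n \<Longrightarrow> gen n n y =
     (if y = n then 2*n-1 else if y = 2*n-1 then n else
      if y = n-1 then 2*n else if y = 2*n then n-1 else y)"
  unfolding gen_def transpose_def by auto

lemma absval_gen_less:
  assumes "1 \<le> i" "i < n" "y \<in> {1..2*n}"
  shows "absval n (gen n i y) = transpose i (i + 1) (absval n y)"
  using assms by (auto simp add: gen_apply_less absval_def transpose_def)

lemma absval_gen_last:
  assumes "2 \<le> n" "y \<in> {1..2*n}"
  shows "absval n (gen n n y) = transpose (n-1) n (absval n y)"
  using assms by (auto simp add: gen_apply_last absval_def transpose_def)

lemma absval_gen:
  assumes "2 \<le> n" "i \<in> {1..n}" "y \<in> {1..2*n}"
  shows "absval n (gen n i y) = transpose (abs_swap n i) (abs_swap n i + 1) (absval n y)"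
  using assms absval_gen_less[of i n y] absval_gen_last[of n y]
  by (cases "i = n") (auto simp: abs_swap_def)

lemma gen_negative_iff_less:
  assumes "1 \<le> i" "i < n"
  shows "n < gen n i y \<longleftrightarrow> n < y"
  using assms by (simp add: gen_apply_less)

lemma gen_negative_iff_last:
  assumes "2 \<le> n" "y \<in> {1..2*n}"
  shows "n < gen n n y \<longleftrightarrow> (if absval n y \<in> {n-1, n} then \<not> n < y else n < y)"
proof -
  consider "y = n - 1" | "y = n" | "y = 2*n - 1" | "y = 2*n" | "y \<notin> {n - 1, n, 2*n - 1, 2*n}"
    by blast
  then show ?thesis using assms by cases (auto simp: gen_apply_last absval_def)
qed

lemma gen_negative_iff:
  assumes "2 \<le> n" "i \<in> {1..n}" "y \<in> {1..2*n}"
  shows "n < gen n i y \<longleftrightarrow> (if i = n \<and> absval n y \<in> {n-1, n} then \<not> n < y else n < y)"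
proof (cases "i = n")
  case True
  then show ?thesis using assms gen_negative_iff_last[of n y] by simp
next
  case False
  then show ?thesis using assms gen_negative_iff_less[of i n y] by simp
qed

lemma absval_antipode: "y \<in> {1..2*n} \<Longrightarrow> absval n (antipode n y) = absval n y"
  by (auto simp: absval_def antipode_def)

lemma antipode_negative_iff: "y \<in> {1..2*n} \<Longrightarrow> n < antipode n y \<longleftrightarrow> \<not> n < y"
  by (auto simp: antipode_def)

lemma antipode_range: "y \<in> {1..2*n} \<Longrightarrow> antipode n y \<in> {1..2*n}"
  by (auto simp: antipode_def)

lemma absval_negative_eqI:
  "y \<in> {1..2*n} \<Longrightarrow> z \<in> {1..2*n} \<Longrightarrow> absval n y = absval n z \<Longrightarrow> (n < y \<longleftrightarrow> n < z) \<Longrightarrow> y = z"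
  by (auto simp: absval_def split: if_splits)

lemma gen_range:
  assumes "2 \<le> n" "i \<in> {1..n}" "y \<in> {1..2*n}"
  shows "gen n i y \<in> {1..2*n}"
proof (cases "i = n")
  case True
  then show ?thesis using assms by (auto simp: gen_apply_last)
next
  case False
  then show ?thesis using assms by (auto simp: gen_apply_less)
qed

lemma gen_antipode:
  assumes "2 \<le> n" "i \<in> {1..n}" "y \<in> {1..2*n}"
  shows "gen n i (antipode n y) = antipode n (gen n i y)"
proof (rule absval_negative_eqI)
  have y': "antipode n y \<in> {1..2*n}" "gen n i y \<in> {1..2*n}"
    by (intro gen_range antipode_range assms)+
  show "gen n i (antipode n y) \<in> {1..2*n}" "antipode n (gen n i y) \<in> {1..2*n}"
    by (intro gen_range antipode_range assms y')+
  show "absval n (gen n i (antipode n y)) = absval n (antipode n (gen n i y))"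
    by (simp only: absval_gen[OF assms(1,2) y'(1)] absval_gen[OF assms] absval_antipode y' assms(3))
  show "n < gen n i (antipode n y) \<longleftrightarrow> n < antipode n (gen n i y)"
    by (simp only: gen_negative_iff[OF assms(1,2) y'(1)] gen_negative_iff[OF assms]
        absval_antipode antipode_negative_iff y' assms(3)) simp
qed

lemma gen_permutes: "2 \<le> n \<Longrightarrow> i \<in> {1..n} \<Longrightarrow> gen n i permutes {1..2*n}"
  unfolding gen_def by (auto intro!: permutes_compose permutes_swap_id)

lemma gen_gen_in_range:
  assumes "2 \<le> n" "i \<in> {1..n}" "y \<in> {1..2*n}"
  shows "gen n i (gen n i y) = y"
proof (rule absval_negative_eqI)
  have y': "gen n i y \<in> {1..2*n}" by (intro gen_range assms)
  show "gen n i (gen n i y) \<in> {1..2*n}" by (intro gen_range assms y')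
  show "absval n (gen n i (gen n i y)) = absval n y"
    by (simp only: absval_gen[OF assms(1,2) y'] absval_gen[OF assms] transpose_involutory)
  have "absval n (gen n i y) \<in> {n-1, n} \<longleftrightarrow> absval n y \<in> {n-1, n}" if "i = n"
    using assms that by (auto simp: absval_gen abs_swap_def transpose_def)
  with gen_negative_iff[OF assms(1,2) y'] gen_negative_iff[OF assms]
  show "n < gen n i (gen n i y) \<longleftrightarrow> n < y" by argo
qed (rule assms)

lemma gen_gen: "2 \<le> n \<Longrightarrow> i \<in> {1..n} \<Longrightarrow> gen n i (gen n i y) = y"
  using gen_gen_in_range permutes_not_in[OF gen_permutes] by (cases "y \<in> {1..2*n}") auto

lemma signed_perm_gen:
  assumes "2 \<le> n" "i \<in> {1..n}" "signed_perm n u"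
  shows "signed_perm n (gen n i \<circ> u)"
proof -
  have u: "u permutes {1..2*n}" using assms(3) signed_perm_def by blast
  have "u j \<in> {1..2*n}" if "j \<in> {1..n}" for j
    using permutes_in_image[OF u] that by auto
  then show ?thesis
    using assms u gen_permutes[OF assms(1,2)] gen_antipode[OF assms(1,2)]
    unfolding signed_perm_def by (auto intro: permutes_compose)
qed

lemma wordprod_Nil [simp]: "wordprod n [] = id"
  by (simp add: wordprod_def)

lemma wordprod_Cons [simp]: "wordprod n (i # xs) = gen n i \<circ> wordprod n xs"
  by (simp add: wordprod_def)

lemma wordprod_append: "wordprod n (xs @ ys) = wordprod n xs \<circ> wordprod n ys"
  by (induction xs) auto

lemma signed_perm_id: "signed_perm n id"
  unfolding signed_perm_def antipode_def by (simp add: permutes_id)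

lemma signed_perm_wordprod_comp:
  assumes "2 \<le> n" "set xs \<subseteq> {1..n}" "signed_perm n u"
  shows "signed_perm n (wordprod n xs \<circ> u)"
  using assms(2)
proof (induction xs)
  case Nil
  then show ?case using assms(3) by simp
next
  case (Cons i xs)
  have "i \<in> {1..n}" using Cons.prems by simp
  moreover have "signed_perm n (wordprod n xs \<circ> u)" by (rule Cons.IH) (use Cons.prems in simp)
  ultimately have "signed_perm n (gen n i \<circ> (wordprod n xs \<circ> u))"
    by (rule signed_perm_gen[OF assms(1)])
  then show ?case by (simp only: wordprod_Cons comp_assoc)
qed

lemma signed_perm_wordprod: "2 \<le> n \<Longrightarrow> set xs \<subseteq> {1..n} \<Longrightarrow> signed_perm n (wordprod n xs)"
  using signed_perm_wordprod_comp[OF _ _ signed_perm_id] by simp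

lemma signed_perm_range: "signed_perm n u \<Longrightarrow> j \<in> {1..2*n} \<Longrightarrow> u j \<in> {1..2*n}"
  unfolding signed_perm_def using permutes_in_image[of u "{1..2*n}" j] by blast

lemma absval_range: "y \<in> {1..2*n} \<Longrightarrow> absval n y \<in> {1..n}"
  by (auto simp: absval_def)

lemma absval_signed_perm_range:
  assumes "signed_perm n u" "j \<in> {1..n}"
  shows "absval n (u j) \<in> {1..n}"
proof -
  have "j \<in> {1..2*n}" using assms(2) by simp
  then show ?thesis by (intro absval_range signed_perm_range[OF assms(1)])
qed

lemma signed_perm_upper: "signed_perm n u \<Longrightarrow> j \<in> {1..n} \<Longrightarrow> u (n + j) = antipode n (u j)"
  unfolding signed_perm_def by simp

lemma signed_perm_eqI:
  assumes "signed_perm n u" "signed_perm n v" "\<And>j. j \<in> {1..n} \<Longrightarrow> u j = v j"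
  shows "u = v"
proof
  fix x
  have perm: "u permutes {1..2*n}" "v permutes {1..2*n}"
    using assms(1,2) unfolding signed_perm_def by blast+
  show "u x = v x"
  proof (cases "x \<in> {1..n}")
    case False
    show ?thesis
    proof (cases "x \<in> {1..2*n}")
      case True
      then obtain j where j: "j \<in> {1..n}" "x = n + j" using False by (intro that[of "x - n"]) auto
      show ?thesis
        unfolding j(2) using signed_perm_upper[OF assms(1) j(1)] signed_perm_upper[OF assms(2) j(1)]
          assms(3)[OF j(1)] by simp
    next
      case False
      then show ?thesis by (simp add: permutes_not_in[OF perm(1)] permutes_not_in[OF perm(2)])
    qed
  qed (rule assms(3))
qed

lemma absval_inj:
  assumes "signed_perm n u" "j \<in> {1..n}" "k \<in> {1..n}" "absval n (u j) = absval n (u k)"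
  shows "j = k"
proof -
  have uj: "u j \<in> {1..2*n}" by (rule signed_perm_range[OF assms(1)]) (use assms(2) in simp)
  have uk: "u k \<in> {1..2*n}" by (rule signed_perm_range[OF assms(1)]) (use assms(3) in simp)
  have "u k = u j \<or> u k = antipode n (u j)"
  proof (cases "n < u k \<longleftrightarrow> n < u j")
    case True
    then show ?thesis using absval_negative_eqI[OF uk uj assms(4)[symmetric]] by simp
  next
    case False
    then have "n < u k \<longleftrightarrow> n < antipode n (u j)" using antipode_negative_iff[OF uj] by simp
    then show ?thesis
      using absval_negative_eqI[OF uk antipode_range[OF uj]] assms(4) absval_antipode[OF uj] by simp
  qed
  then have "u k = u j \<or> u k = u (n + j)" using signed_perm_upper[OF assms(1,2)] by simp
  moreover have "inj u"
    using assms(1) permutes_inj[of u "{1..2*n}"] unfolding signed_perm_def by simp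
  ultimately have "k = j \<or> k = n + j" by (simp add: inj_eq)
  then show ?thesis using assms(2,3) by auto
qed

lemma absval_bij:
  assumes "signed_perm n u"
  shows "bij_betw (\<lambda>j. absval n (u j)) {1..n} {1..n}"
proof -
  have "inj_on (\<lambda>j. absval n (u j)) {1..n}"
    using absval_inj[OF assms] by (auto simp: inj_on_def)
  moreover have "(\<lambda>j. absval n (u j)) ` {1..n} \<subseteq> {1..n}"
    using absval_signed_perm_range[OF assms] by blast
  ultimately show ?thesis by (simp add: bij_betw_def endo_inj_surj)
qed

definition abs_pos :: "nat \<Rightarrow> (nat \<Rightarrow> nat) \<Rightarrow> nat \<Rightarrow> nat" where
  "abs_pos n u t = inv_into {1..n} (\<lambda>j. absval n (u j)) t"

lemma abs_pos:
  assumes "signed_perm n u" "t \<in> {1..n}"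
  shows "abs_pos n u t \<in> {1..n}" "absval n (u (abs_pos n u t)) = t"
proof -
  have b: "bij_betw (\<lambda>j. absval n (u j)) {1..n} {1..n}" by (rule absval_bij[OF assms(1)])
  show "abs_pos n u t \<in> {1..n}"
    unfolding abs_pos_def by (rule inv_into_into) (use b assms(2) in \<open>simp add: bij_betw_def\<close>)
  show "absval n (u (abs_pos n u t)) = t"
    unfolding abs_pos_def using bij_betw_inv_into_right[OF b assms(2)] by simp
qed

lemma abs_pos_absval:
  "signed_perm n u \<Longrightarrow> j \<in> {1..n} \<Longrightarrow> abs_pos n u (absval n (u j)) = j"
  unfolding abs_pos_def by (rule bij_betw_inv_into_left[OF absval_bij])

definition pair_weight :: "nat \<Rightarrow> nat \<Rightarrow> bool \<Rightarrow> nat" where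
  "pair_weight a b neg = (if a < b then (if neg then 2 else 0) else 1)"

definition index_pairs :: "nat \<Rightarrow> (nat \<times> nat) set" where
  "index_pairs n = Sigma {1..n} (\<lambda>j. {j<..n})"

definition weight :: "nat \<Rightarrow> (nat \<Rightarrow> nat) \<Rightarrow> nat \<times> nat \<Rightarrow> nat" where
  "weight n u p = pair_weight (absval n (u (fst p))) (absval n (u (snd p))) (n < u (fst p))"

definition total_weight :: "nat \<Rightarrow> (nat \<Rightarrow> nat) \<Rightarrow> nat" where
  "total_weight n u = (\<Sum>p\<in>index_pairs n. weight n u p)"

lemma finite_index_pairs [simp]: "finite (index_pairs n)"
  by (simp add: index_pairs_def)

lemma mem_index_pairs: "p \<in> index_pairs n \<longleftrightarrow> 1 \<le> fst p \<and> fst p < snd p \<and> snd p \<le> n"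
  by (cases p) (auto simp: index_pairs_def)

lemma pair_weight_transpose_other:
  assumes "a \<noteq> b" "a \<in> {1..n}" "b \<in> {1..n}" "flip \<Longrightarrow> t + 1 = n" "{a, b} \<noteq> {t, t + 1}"
  shows "pair_weight (transpose t (t + 1) a) (transpose t (t + 1) b)
           (if flip \<and> a \<in> {t, t + 1} then \<not> neg else neg) = pair_weight a b neg"
proof (cases "a \<in> {t, t + 1}")
  case True
  then have b: "b \<notin> {t, t + 1}" using assms(1,5) by auto
  then have Tb: "transpose t (t + 1) b = b" by simp
  have Ta: "transpose t (t + 1) a \<in> {t, t + 1}" using True by auto
  show ?thesis
  proof (cases flip)
    case True
    then have "b < t" using assms(3,4) b by auto
    then show ?thesis using \<open>a \<in> {t, t + 1}\<close> Ta Tb True by (auto simp: pair_weight_def)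
  next
    case False
    have "transpose t (t + 1) a < b \<longleftrightarrow> a < b" using \<open>a \<in> {t, t + 1}\<close> b by auto
    then show ?thesis using Tb False by (simp add: pair_weight_def)
  qed
next
  case False
  then have "transpose t (t + 1) a = a" by simp
  moreover have "a < transpose t (t + 1) b \<longleftrightarrow> a < b" using False by (auto simp: transpose_def)
  ultimately show ?thesis using False by (simp add: pair_weight_def)
qed

lemma pair_weight_le_Suc: "(a < b \<Longrightarrow> \<not> c < d) \<Longrightarrow> pair_weight c d neg' \<le> pair_weight a b neg + 1"
  by (simp add: pair_weight_def)

lemma weight_gen:
  assumes "2 \<le> n" "i \<in> {1..n}" "signed_perm n u" "p \<in> index_pairs n"
  defines "T \<equiv> transpose (abs_swap n i) (abs_swap n i + 1)"
  shows "weight n (gen n i \<circ> u) p =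
           pair_weight (T (absval n (u (fst p)))) (T (absval n (u (snd p))))
             (if i = n \<and> absval n (u (fst p)) \<in> {n-1, n} then \<not> n < u (fst p) else n < u (fst p))"
proof -
  have "fst p \<in> {1..2*n}" "snd p \<in> {1..2*n}" using assms(4) by (auto simp: mem_index_pairs)
  then have "u (fst p) \<in> {1..2*n}" "u (snd p) \<in> {1..2*n}" by (simp_all only: signed_perm_range[OF assms(3)])
  then show ?thesis
    unfolding weight_def T_def by (simp add: absval_gen[OF assms(1,2)] gen_negative_iff[OF assms(1,2)])
qed

definition swap_pair :: "nat \<Rightarrow> (nat \<Rightarrow> nat) \<Rightarrow> nat \<Rightarrow> nat \<times> nat" where
  "swap_pair n u t =
     (min (abs_pos n u t) (abs_pos n u (t + 1)), max (abs_pos n u t) (abs_pos n u (t + 1)))"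

lemma swap_pair:
  assumes "signed_perm n u" "t \<in> {1..n-1}"
  shows "swap_pair n u t \<in> index_pairs n"
    and "{absval n (u (fst (swap_pair n u t))), absval n (u (snd (swap_pair n u t)))} = {t, t + 1}"
proof -
  have t: "t \<in> {1..n}" "t + 1 \<in> {1..n}" using assms(2) by auto
  note pos = abs_pos[OF assms(1) t(1)] abs_pos[OF assms(1) t(2)]
  then have "abs_pos n u t \<noteq> abs_pos n u (t + 1)" by (metis n_not_Suc_n Suc_eq_plus1)
  with pos show "swap_pair n u t \<in> index_pairs n"
    by (auto simp: swap_pair_def mem_index_pairs min_def max_def)
  show "{absval n (u (fst (swap_pair n u t))), absval n (u (snd (swap_pair n u t)))} = {t, t + 1}"
    using pos by (auto simp: swap_pair_def min_def max_def)
qed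

lemma swap_pair_unique:
  assumes "signed_perm n u" "p \<in> index_pairs n"
    and "{absval n (u (fst p)), absval n (u (snd p))} = {t, t + 1}"
  shows "p = swap_pair n u t"
proof -
  have "fst p \<in> {1..n}" "snd p \<in> {1..n}" "fst p < snd p" using assms(2) by (auto simp: mem_index_pairs)
  moreover have "{fst p, snd p} = {abs_pos n u t, abs_pos n u (t + 1)}"
    using assms(3) abs_pos_absval[OF assms(1) \<open>fst p \<in> {1..n}\<close>]
      abs_pos_absval[OF assms(1) \<open>snd p \<in> {1..n}\<close>]
    by (auto simp: doubleton_eq_iff)
  ultimately show ?thesis by (cases p) (auto simp: swap_pair_def doubleton_eq_iff)
qed

lemma weight_gen_other:
  assumes "2 \<le> n" "i \<in> {1..n}" "signed_perm n u" "p \<in> index_pairs n"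
    and "p \<noteq> swap_pair n u (abs_swap n i)"
  shows "weight n (gen n i \<circ> u) p = weight n u p"
proof -
  let ?t = "abs_swap n i" and ?a = "absval n (u (fst p))" and ?b = "absval n (u (snd p))"
  have p: "fst p \<in> {1..n}" "snd p \<in> {1..n}" "fst p \<noteq> snd p"
    using assms(4) by (auto simp: mem_index_pairs)
  have ab: "?a \<noteq> ?b" using absval_inj[OF assms(3) p(1,2)] p(3) by blast
  have range: "?a \<in> {1..n}" "?b \<in> {1..n}"
    using p(1,2) by (simp_all only: absval_signed_perm_range[OF assms(3)])
  have last: "i = n \<Longrightarrow> ?t + 1 = n" using assms(1) by (simp add: abs_swap_def)
  have other: "{?a, ?b} \<noteq> {?t, ?t + 1}" using swap_pair_unique[OF assms(3,4)] assms(5) by blast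
  have flip: "(i = n \<and> ?a \<in> {n - 1, n}) = (i = n \<and> ?a \<in> {?t, ?t + 1})"
    using assms(1) by (auto simp: abs_swap_def)
  have "weight n (gen n i \<circ> u) p = pair_weight (transpose ?t (?t + 1) ?a) (transpose ?t (?t + 1) ?b)
      (if i = n \<and> ?a \<in> {?t, ?t + 1} then \<not> n < u (fst p) else n < u (fst p))"
    using weight_gen[OF assms(1-4)] unfolding flip .
  also have "\<dots> = weight n u p"
    unfolding weight_def by (rule pair_weight_transpose_other[OF ab range last other])
  finally show ?thesis .
qed

lemma total_weight_gen:
  assumes "2 \<le> n" "i \<in> {1..n}" "signed_perm n u"
  defines "p \<equiv> swap_pair n u (abs_swap n i)"
  shows "total_weight n (gen n i \<circ> u) + weight n u p = total_weight n u + weight n (gen n i \<circ> u) p"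
proof -
  have p: "p \<in> index_pairs n"
    unfolding p_def by (rule swap_pair(1)[OF assms(3) abs_swap_range[OF assms(1,2)]])
  have rest: "(\<Sum>q\<in>index_pairs n - {p}. weight n (gen n i \<circ> u) q) = (\<Sum>q\<in>index_pairs n - {p}. weight n u q)"
    using weight_gen_other[OF assms(1-3)] unfolding p_def by (intro sum.cong) auto
  show ?thesis
    unfolding total_weight_def sum.remove[OF finite_index_pairs p] rest by simp
qed

lemma total_weight_gen_le:
  assumes "2 \<le> n" "i \<in> {1..n}" "signed_perm n u"
  shows "total_weight n (gen n i \<circ> u) \<le> total_weight n u + 1"
proof -
  let ?t = "abs_swap n i"
  let ?p = "swap_pair n u ?t"
  have t: "?t \<in> {1..n-1}" by (rule abs_swap_range[OF assms(1,2)])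
  have swapped: "{absval n (u (fst ?p)), absval n (u (snd ?p))} = {?t, ?t + 1}"
    by (rule swap_pair(2)[OF assms(3) t])
  have "weight n (gen n i \<circ> u) ?p \<le> weight n u ?p + 1"
    unfolding weight_gen[OF assms swap_pair(1)[OF assms(3) t]]
    unfolding weight_def
    by (rule pair_weight_le_Suc) (use swapped in \<open>auto simp: doubleton_eq_iff\<close>)
  then show ?thesis using total_weight_gen[OF assms] by simp
qed

lemma total_weight_id: "total_weight n id = 0"
  unfolding total_weight_def
  by (rule sum.neutral) (auto simp: mem_index_pairs weight_def pair_weight_def absval_def)

lemma total_weight_wordprod_le:
  assumes "2 \<le> n" "set xs \<subseteq> {1..n}"
  shows "total_weight n (wordprod n xs) \<le> length xs"
  using assms(2)
proof (induction xs)
  case Nil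
  then show ?case using total_weight_id[of n] by (simp add: id_def)
next
  case (Cons i xs)
  then have i: "i \<in> {1..n}" and xs: "set xs \<subseteq> {1..n}" by auto
  have "total_weight n (wordprod n (i # xs)) \<le> total_weight n (wordprod n xs) + 1"
    unfolding wordprod_Cons by (rule total_weight_gen_le[OF assms(1) i signed_perm_wordprod[OF assms(1) xs]])
  then show ?case using Cons.IH[OF xs] by (simp del: wordprod_Cons)
qed

lemma wlen_le_length: "is_word n xs \<Longrightarrow> wlen n (wordprod n xs) \<le> length xs"
  unfolding wlen_def by (rule Least_le) blast

lemma total_weight_le_wlen:
  assumes "2 \<le> n" "is_word n xs" "wordprod n xs = u"
  shows "total_weight n u \<le> wlen n u"
proof -
  let ?P = "\<lambda>k. \<exists>xs. is_word n xs \<and> length xs = k \<and> wordprod n xs = u"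
  have "?P (wlen n u)" unfolding wlen_def by (rule LeastI[of _ "length xs"]) (use assms in blast)
  then obtain ys where "is_word n ys" "length ys = wlen n u" "wordprod n ys = u" by blast
  then show ?thesis using total_weight_wordprod_le[OF assms(1)] unfolding is_word_def by metis
qed

lemma no_descent_weight:
  assumes "2 \<le> n" "i \<in> {1..n}" "signed_perm n u"
    and "\<not> total_weight n (gen n i \<circ> u) < total_weight n u"
  shows "weight n u (swap_pair n u (abs_swap n i)) \<le> weight n (gen n i \<circ> u) (swap_pair n u (abs_swap n i))"
  using total_weight_gen[OF assms(1-3)] assms(4) by linarith

lemma no_descent_adjacent:
  assumes "2 \<le> n" "signed_perm n u" "1 \<le> t" "t < n"
    and "\<not> total_weight n (gen n t \<circ> u) < total_weight n u"
  shows "abs_pos n u t < abs_pos n u (t + 1) \<Longrightarrow> \<not> n < u (abs_pos n u t)"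
    and "abs_pos n u (t + 1) < abs_pos n u t \<Longrightarrow> n < u (abs_pos n u (t + 1))"
proof -
  have i: "t \<in> {1..n}" and swap: "abs_swap n t = t" using assms(3,4) by (auto simp: abs_swap_def)
  let ?p = "swap_pair n u t"
  have p: "?p \<in> index_pairs n" using swap_pair(1)[OF assms(2), of t] assms(3,4) by simp
  have "weight n u ?p \<le> weight n (gen n t \<circ> u) ?p"
    using no_descent_weight[OF assms(1) i assms(2,5)] unfolding swap .
  also have "\<dots> = pair_weight (transpose t (t + 1) (absval n (u (fst ?p))))
      (transpose t (t + 1) (absval n (u (snd ?p)))) (n < u (fst ?p))"
    using weight_gen[OF assms(1) i assms(2) p] assms(4) unfolding swap by simp
  finally have nd: "weight n u ?p \<le> pair_weight (transpose t (t + 1) (absval n (u (fst ?p))))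
      (transpose t (t + 1) (absval n (u (snd ?p)))) (n < u (fst ?p))" .
  have pos: "absval n (u (abs_pos n u t)) = t" "absval n (u (abs_pos n u (t + 1))) = t + 1"
    using abs_pos(2)[OF assms(2)] assms(3,4) by auto
  show "\<not> n < u (abs_pos n u t)" if "abs_pos n u t < abs_pos n u (t + 1)"
    using nd that pos by (simp add: swap_pair_def weight_def pair_weight_def split: if_splits)
  show "n < u (abs_pos n u (t + 1))" if "abs_pos n u (t + 1) < abs_pos n u t"
    using nd that pos by (simp add: swap_pair_def weight_def pair_weight_def split: if_splits)
qed

lemma no_descent_last:
  assumes "2 \<le> n" "signed_perm n u"
    and "\<not> total_weight n (gen n n \<circ> u) < total_weight n u"
    and "abs_pos n u n < abs_pos n u (n - 1)"
  shows "\<not> n < u (abs_pos n u n)"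
proof -
  have i: "n \<in> {1..n}" and swap: "abs_swap n n = n - 1" and n1: "n - 1 + 1 = n"
    using assms(1) by (auto simp: abs_swap_def)
  let ?p = "swap_pair n u (n - 1)"
  have p: "?p \<in> index_pairs n" using swap_pair(1)[OF assms(2), of "n - 1"] assms(1) by simp
  have pos: "absval n (u (abs_pos n u (n - 1))) = n - 1" "absval n (u (abs_pos n u n)) = n"
    using abs_pos(2)[OF assms(2)] assms(1) by auto
  have p_eq: "?p = (abs_pos n u n, abs_pos n u (n - 1))"
    using assms(4) n1 by (simp add: swap_pair_def)
  have "weight n u ?p \<le> weight n (gen n n \<circ> u) ?p"
    using no_descent_weight[OF assms(1) i assms(2,3)] unfolding swap .
  also have "\<dots> = pair_weight (n - 1) n (\<not> n < u (abs_pos n u n))"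
    using weight_gen[OF assms(1) i assms(2) p] unfolding swap n1 p_eq fst_conv snd_conv pos by simp
  finally have "weight n u ?p \<le> pair_weight (n - 1) n (\<not> n < u (abs_pos n u n))" .
  then show ?thesis
    unfolding p_eq weight_def fst_conv snd_conv pos using assms(1) by (simp add: pair_weight_def split: if_splits)
qed

lemma increasing_self_map_eq_id:
  fixes P :: "nat \<Rightarrow> nat"
  assumes inc: "\<And>t. 1 \<le> t \<Longrightarrow> t < n \<Longrightarrow> P t < P (t + 1)" and into: "P ` {1..n} \<subseteq> {1..n}"
    and t: "t \<in> {1..n}"
  shows "P t = t"
proof -
  have "t \<le> P t" using t
  proof (induction t)
    case (Suc t)
    show ?case
    proof (cases "t = 0")
      case True
      have "P (Suc t) \<in> {1..n}" using into Suc.prems by blast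
      then show ?thesis using True by simp
    next
      case False
      then have "t \<le> P t" "P t < P (Suc t)" using Suc inc[of t] by auto
      then show ?thesis by simp
    qed
  qed simp
  moreover from t have "t \<le> n" by simp
  then have "P t \<le> t"
  proof (induction rule: inc_induct)
    case base
    have "n \<in> {1..n}" using t by simp
    then have "P n \<in> {1..n}" using into by blast
    then show ?case by simp
  next
    case (step m)
    then have "P m < P (Suc m)" using t inc[of m] by simp
    with step.IH show ?case by simp
  qed
  ultimately show ?thesis by simp
qed

text \<open>P t is the position of absolute value t and S t its sign; the hypotheses say that no
  generator lowers the total weight.\<close>

lemma no_descent_positions:
  fixes P :: "nat \<Rightarrow> nat" and S :: "nat \<Rightarrow> bool"
  assumes "2 \<le> n" and inj: "inj_on P {1..n}" and into: "P ` {1..n} \<subseteq> {1..n}"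
    and asc: "\<And>t. 1 \<le> t \<Longrightarrow> t < n \<Longrightarrow> P t < P (t + 1) \<Longrightarrow> \<not> S t"
    and desc: "\<And>t. 1 \<le> t \<Longrightarrow> t < n \<Longrightarrow> P (t + 1) < P t \<Longrightarrow> S (t + 1)"
    and last: "P n < P (n - 1) \<Longrightarrow> \<not> S n"
    and even: "even (card {t\<in>{1..n}. S t})"
    and t: "t \<in> {1..n}"
  shows "\<not> S t" and "P t = t"
proof -
  have ne: "P t \<noteq> P (t + 1)" if "1 \<le> t" "t < n" for t
    using inj_onD[OF inj, of t "t + 1"] that by auto
  have up: "S (t + 1) \<and> P (t + 1) < P t" if "1 \<le> t" "t < n" "S t" for t
    using asc[OF that(1,2)] desc[OF that(1,2)] ne[OF that(1,2)] that(3) by (metis linorder_neqE_nat)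
  have below_last: "\<not> S t" if "1 \<le> t" "t < n" for t
  proof
    assume "S t"
    from that have "t \<le> n - 1" by simp
    then have "S (n - 1)"
    proof (induction rule: dec_induct)
      case (step m)
      then show ?case using up[of m] that(1) by simp
    qed (rule \<open>S t\<close>)
    then have "S n" "P n < P (n - 1)" using up[of "n - 1"] assms(1) by auto
    with last show False by simp
  qed
  then have sub: "{t\<in>{1..n}. S t} \<subseteq> {n}" by force
  then have "card {t\<in>{1..n}. S t} \<le> 1" using card_mono[of "{n}"] by simp
  with even have "card {t\<in>{1..n}. S t} = 0" by presburger
  then have "{t\<in>{1..n}. S t} = {}" using finite_subset[OF sub] by simp
  then have none: "\<not> S t" if "t \<in> {1..n}" for t using that by blast
  then show "\<not> S t" using t .
  have "P t < P (t + 1)" if "1 \<le> t" "t < n" for t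
    using desc[OF that] ne[OF that] none[of "t + 1"] that by fastforce
  then show "P t = t" using increasing_self_map_eq_id into t by blast
qed

lemma negset_abs_pos:
  assumes "signed_perm n u"
  shows "negset n u = abs_pos n u ` {t\<in>{1..n}. n < u (abs_pos n u t)}"
proof
  show "negset n u \<subseteq> abs_pos n u ` {t\<in>{1..n}. n < u (abs_pos n u t)}"
  proof
    fix j assume "j \<in> negset n u"
    then have j: "j \<in> {1..n}" "n < u j" by (auto simp: negset_def)
    then have "j = abs_pos n u (absval n (u j))" using abs_pos_absval[OF assms] by simp
    moreover have "absval n (u j) \<in> {1..n}" by (rule absval_signed_perm_range[OF assms j(1)])
    ultimately show "j \<in> abs_pos n u ` {t\<in>{1..n}. n < u (abs_pos n u t)}" using j(2) by force
  qed
  show "abs_pos n u ` {t\<in>{1..n}. n < u (abs_pos n u t)} \<subseteq> negset n u"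
    using abs_pos(1)[OF assms] by (auto simp: negset_def)
qed

lemma descent_exists:
  assumes "2 \<le> n" "inW n u" "u \<noteq> id"
  shows "\<exists>i\<in>{1..n}. total_weight n (gen n i \<circ> u) < total_weight n u"
proof (rule ccontr)
  assume "\<not> ?thesis"
  then have nd: "\<And>i. i \<in> {1..n} \<Longrightarrow> \<not> total_weight n (gen n i \<circ> u) < total_weight n u" by blast
  have u: "signed_perm n u" and even: "even (card (negset n u))"
    using assms(2) inW_iff_signed_perm by auto
  define P where "P = abs_pos n u"
  define S where "S t \<longleftrightarrow> n < u (P t)" for t
  have inj: "inj_on P {1..n}"
    unfolding P_def by (rule inj_on_inverseI[of _ "\<lambda>j. absval n (u j)"]) (use abs_pos[OF u] in blast)
  have into: "P ` {1..n} \<subseteq> {1..n}" unfolding P_def using abs_pos(1)[OF u] by blast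
  have "card (negset n u) = card {t\<in>{1..n}. S t}"
    unfolding negset_abs_pos[OF u] S_def P_def[symmetric]
    by (rule card_image) (rule inj_on_subset[OF inj], blast)
  then have "even (card {t\<in>{1..n}. S t})" using even by simp
  note no_descent = no_descent_positions[OF assms(1) inj into _ _ _ this]
  have fixed: "P t = t" "\<not> S t" if "t \<in> {1..n}" for t
    using no_descent[OF _ _ _ that] no_descent_adjacent[OF assms(1) u _ _ nd]
      no_descent_last[OF assms(1) u nd] assms(1) unfolding P_def S_def by auto
  have "u j = id j" if "j \<in> {1..n}" for j
  proof -
    let ?t = "absval n (u j)"
    have t: "?t \<in> {1..n}" "P ?t = j"
      using absval_signed_perm_range[OF u that] abs_pos_absval[OF u that] unfolding P_def by auto
    with fixed have "?t = j" "\<not> n < u j" unfolding S_def by auto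
    then show ?thesis by (simp add: absval_def split: if_splits)
  qed
  then have "u = id" using signed_perm_eqI[OF u signed_perm_id] by blast
  with assms(3) show False ..
qed

lemma negset_gen:
  assumes "2 \<le> n" "i \<in> {1..n}" "signed_perm n u"
  shows "negset n (gen n i \<circ> u) =
           {j\<in>{1..n}. if i = n \<and> absval n (u j) \<in> {n-1, n} then \<not> n < u j else n < u j}"
proof -
  have "u j \<in> {1..2*n}" if "j \<in> {1..n}" for j
    by (rule signed_perm_range[OF assms(3)]) (use that in simp)
  then show ?thesis unfolding negset_def using gen_negative_iff[OF assms(1,2)] by auto
qed

lemma even_card_symdiff:
  assumes "finite A" "finite B" "even (card B)"
  shows "even (card ((A - B) \<union> (B - A))) \<longleftrightarrow> even (card A)"
proof -
  have "card ((A - B) \<union> (B - A)) = card (A - B) + card (B - A)"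
    by (rule card_Un_disjoint) (use assms in auto)
  moreover have "card A = card (A \<inter> B) + card (A - B)" "card B = card (A \<inter> B) + card (B - A)"
    using card_Int_Diff[OF assms(1), of B] card_Int_Diff[OF assms(2), of A] by (simp_all add: Int_commute)
  ultimately show ?thesis using assms(3) by presburger
qed

lemma inW_gen:
  assumes "2 \<le> n" "i \<in> {1..n}" "inW n u"
  shows "inW n (gen n i \<circ> u)"
proof -
  have u: "signed_perm n u" and even: "even (card (negset n u))"
    using assms(3) inW_iff_signed_perm by auto
  have "even (card (negset n (gen n i \<circ> u)))"
  proof (cases "i = n")
    case False
    then have "negset n (gen n i \<circ> u) = negset n u"
      using negset_gen[OF assms(1,2) u] by (simp add: negset_def)
    with even show ?thesis by simp
  next
    case True
    let ?X = "{abs_pos n u (n - 1), abs_pos n u n}"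
    have pos: "abs_pos n u (n - 1) \<in> {1..n}" "absval n (u (abs_pos n u (n - 1))) = n - 1"
      "abs_pos n u n \<in> {1..n}" "absval n (u (abs_pos n u n)) = n"
      using abs_pos[OF u, of "n - 1"] abs_pos[OF u, of n] assms(1) by auto
    have X: "{j\<in>{1..n}. absval n (u j) \<in> {n-1, n}} = ?X"
      using pos abs_pos_absval[OF u] by force
    have "card ?X = 2" using pos assms(1) by (auto simp: card_insert_if)
    moreover have "negset n (gen n i \<circ> u) = (negset n u - ?X) \<union> (?X - negset n u)"
      using negset_gen[OF assms(1,2) u] True X[symmetric] by (auto simp: negset_def)
    ultimately show ?thesis
      using even_card_symdiff[of "negset n u" ?X] even by (simp add: negset_def)
  qed
  then show ?thesis using signed_perm_gen[OF assms(1,2) u] inW_iff_signed_perm by blast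
qed

lemma inW_imp_word:
  assumes "2 \<le> n" "inW n u"
  shows "\<exists>xs. is_word n xs \<and> wordprod n xs = u"
  using assms(2)
proof (induction "total_weight n u" arbitrary: u rule: less_induct)
  case less
  show ?case
  proof (cases "u = id")
    case True
    then show ?thesis by (intro exI[of _ "[]"]) (simp add: is_word_def)
  next
    case False
    then obtain i where i: "i \<in> {1..n}" "total_weight n (gen n i \<circ> u) < total_weight n u"
      using descent_exists[OF assms(1) less.prems] by blast
    then obtain xs where xs: "is_word n xs" "wordprod n xs = gen n i \<circ> u"
      using less.hyps inW_gen[OF assms(1) i(1) less.prems] by blast
    have "wordprod n (i # xs) = u"
      using xs(2) gen_gen[OF assms(1) i(1)] by (simp add: fun_eq_iff)
    moreover have "is_word n (i # xs)" using xs(1) i(1) by (simp add: is_word_def)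
    ultimately show ?thesis by blast
  qed
qed

definition sign_sorted :: "nat \<Rightarrow> (nat \<Rightarrow> nat) \<Rightarrow> bool" where
  "sign_sorted n u \<longleftrightarrow> (\<forall>j k. 1 \<le> j \<longrightarrow> j < k \<longrightarrow> k \<le> n \<longrightarrow>
     (if n < u j then absval n (u k) < absval n (u j) else absval n (u j) < absval n (u k)))"

lemma sum_negative_pairs:
  "(\<Sum>p\<in>index_pairs n. if n < u (fst p) then 1 else 0) = (\<Sum>j\<in>negset n u. n - j)"
proof -
  have "(\<Sum>p\<in>index_pairs n. if n < u (fst p) then 1 else 0)
      = (\<Sum>j\<in>{1..n}. \<Sum>k\<in>{j<..n}. if n < u j then 1 else 0::nat)"
    unfolding index_pairs_def by (subst sum.Sigma) (auto simp: case_prod_beta)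
  also have "\<dots> = (\<Sum>j\<in>{1..n}. if n < u j then n - j else 0)"
    by (rule sum.cong) auto
  also have "\<dots> = (\<Sum>j\<in>negset n u. n - j)"
    unfolding negset_def by (rule sum.inter_filter[symmetric]) simp
  finally show ?thesis .
qed

lemma negative_le_weight: "(if n < u (fst p) then 1 else 0) \<le> weight n u p"
  by (simp add: weight_def pair_weight_def)

lemma negset_sum_le_total_weight: "(\<Sum>j\<in>negset n u. n - j) \<le> total_weight n u"
  unfolding sum_negative_pairs[symmetric] total_weight_def by (intro sum_mono negative_le_weight)

lemma sign_sorted_if_total_weight_eq:
  assumes "signed_perm n u" "total_weight n u = (\<Sum>j\<in>negset n u. n - j)"
  shows "sign_sorted n u"
  unfolding sign_sorted_def
proof (intro allI impI)
  fix j k assume jk: "1 \<le> j" "j < k" "k \<le> n"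
  then have p: "(j, k) \<in> index_pairs n" by (simp add: mem_index_pairs)
  have "(if n < u (fst (j, k)) then 1 else 0) = weight n u (j, k)"
    by (rule sum_mono_inv[OF _ negative_le_weight p finite_index_pairs])
      (use assms(2) sum_negative_pairs[of n u] in \<open>simp add: total_weight_def\<close>)
  then have "pair_weight (absval n (u j)) (absval n (u k)) (n < u j) = (if n < u j then 1 else 0)"
    by (force simp: weight_def)
  moreover have "absval n (u j) \<noteq> absval n (u k)" using absval_inj[OF assms(1), of j k] jk by auto
  ultimately show "if n < u j then absval n (u k) < absval n (u j) else absval n (u j) < absval n (u k)"
    by (auto simp: pair_weight_def split: if_splits)
qed

lemma card_absval_below:
  assumes "signed_perm n u" "j \<in> {1..n}"
  shows "card {k\<in>{1..n}. absval n (u k) < absval n (u j)} + 1 = absval n (u j)"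
proof -
  let ?f = "\<lambda>k. absval n (u k)"
  have bij: "bij_betw ?f {1..n} {1..n}" by (rule absval_bij[OF assms(1)])
  have "?f ` {k\<in>{1..n}. ?f k < ?f j} = {t\<in>?f ` {1..n}. t < ?f j}" by blast
  also have "\<dots> = {1..<?f j}"
    using bij_betw_imp_surj_on[OF bij] absval_signed_perm_range[OF assms] by auto
  finally have "card (?f ` {k\<in>{1..n}. ?f k < ?f j}) = ?f j - 1" by simp
  moreover have "inj_on ?f {k\<in>{1..n}. ?f k < ?f j}"
    using bij_betw_imp_inj_on[OF bij] by (rule inj_on_subset) blast
  ultimately show ?thesis using absval_signed_perm_range[OF assms] by (simp add: card_image)
qed

lemma sign_sortedD:
  "sign_sorted n u \<Longrightarrow> 1 \<le> j \<Longrightarrow> j < k \<Longrightarrow> k \<le> n \<Longrightarrow>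
   (if n < u j then absval n (u k) < absval n (u j) else absval n (u j) < absval n (u k))"
  unfolding sign_sorted_def by blast

lemma sign_sorted_below:
  assumes "sign_sorted n u" "j \<in> {1..n}"
  shows "{k\<in>{1..n}. absval n (u k) < absval n (u j)} =
           {k\<in>{1..n}. (k < j \<and> k \<notin> negset n u) \<or> (j < k \<and> j \<in> negset n u)}"
proof (intro Collect_cong conj_cong refl)
  fix k assume k: "k \<in> {1..n}"
  consider "k < j" | "k = j" | "j < k" by linarith
  then show "absval n (u k) < absval n (u j) \<longleftrightarrow> (k < j \<and> k \<notin> negset n u) \<or> (j < k \<and> j \<in> negset n u)"
  proof cases
    case 1
    have "k \<in> negset n u \<longleftrightarrow> n < u k" using k by (simp add: negset_def)
    with 1 show ?thesis using sign_sortedD[OF assms(1), of k j] assms(2) k by (cases "n < u k") auto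
  next
    case 3
    have "j \<in> negset n u \<longleftrightarrow> n < u j" using assms(2) by (simp add: negset_def)
    with 3 show ?thesis using sign_sortedD[OF assms(1), of j k] assms(2) k by (cases "n < u j") auto
  qed simp
qed

lemma sign_sorted_unique:
  assumes "signed_perm n u" "signed_perm n v" "negset n u = negset n v"
    and "sign_sorted n u" "sign_sorted n v"
  shows "u = v"
proof (rule signed_perm_eqI[OF assms(1,2)])
  fix j assume j: "j \<in> {1..n}"
  have below: "{k\<in>{1..n}. absval n (u k) < absval n (u j)} = {k\<in>{1..n}. absval n (v k) < absval n (v j)}"
    unfolding sign_sorted_below[OF assms(4) j] sign_sorted_below[OF assms(5) j] assms(3) ..
  have "absval n (u j) = card {k\<in>{1..n}. absval n (u k) < absval n (u j)} + 1"
    by (rule card_absval_below[OF assms(1) j, symmetric])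
  also have "\<dots> = card {k\<in>{1..n}. absval n (v k) < absval n (v j)} + 1" unfolding below ..
  also have "\<dots> = absval n (v j)" by (rule card_absval_below[OF assms(2) j])
  finally have abs_eq: "absval n (u j) = absval n (v j)" .
  have "j \<in> negset n u \<longleftrightarrow> n < u j" "j \<in> negset n v \<longleftrightarrow> n < v j"
    using j by (simp_all add: negset_def)
  then have sign_eq: "n < u j \<longleftrightarrow> n < v j" using assms(3) by blast
  have "j \<in> {1..2*n}" using j by simp
  then have "u j \<in> {1..2*n}" "v j \<in> {1..2*n}"
    by (simp_all only: signed_perm_range[OF assms(1)] signed_perm_range[OF assms(2)])
  then show "u j = v j" using absval_negative_eqI abs_eq sign_eq by blast
qed

definition pair_factor :: "nat \<Rightarrow> nat \<Rightarrow> nat \<Rightarrow> nat list" where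
  "pair_factor n p q = [n] @ run (n-2) p @ run (n-1) q"

fun word_of_pairs :: "nat \<Rightarrow> nat list \<Rightarrow> nat list" where
  "word_of_pairs n (p # q # rest) = pair_factor n p q @ word_of_pairs n rest"
| "word_of_pairs n _ = []"

lemma run_Suc: "b \<le> Suc a \<Longrightarrow> run (Suc a) b = Suc a # run a b"
  by (simp add: run_def)

lemma run_empty: "run a (Suc a) = []"
  by (simp add: run_def)

lemma set_run: "set (run a b) = {b..a}"
  by (auto simp: run_def)

lemma length_run: "length (run a b) = Suc a - b"
  by (simp add: run_def Suc_diff_le)

definition run_shift :: "nat \<Rightarrow> nat \<Rightarrow> nat \<Rightarrow> nat" where
  "run_shift a b y = (if y = b then Suc a else if b < y \<and> y \<le> Suc a then y - 1 else y)"

lemma wordprod_run: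
  assumes "2 \<le> n" "1 \<le> b" "b \<le> Suc a" "Suc a \<le> n" "y \<in> {1..n}"
  shows "wordprod n (run a b) y = run_shift a b y \<and> wordprod n (run a b) (n + y) = n + run_shift a b y"
  using assms(3,4)
proof (induction a)
  case 0
  then have "b = 1" using assms(2) by simp
  then show ?case by (auto simp: run_empty run_shift_def)
next
  case (Suc a)
  show ?case
  proof (cases "b = Suc (Suc a)")
    case True
    then show ?thesis using assms(5) by (auto simp: run_empty run_shift_def)
  next
    case False
    then have b: "b \<le> Suc a" using Suc.prems by simp
    have gen: "gen n (Suc a) z = (if z = Suc a then Suc (Suc a) else if z = Suc (Suc a) then Suc a else
        if z = n + Suc a then n + Suc (Suc a) else if z = n + Suc (Suc a) then n + Suc a else z)" for z
      using gen_apply_less[OF assms(1), of "Suc a"] Suc.prems by simp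
    show ?thesis
      using Suc.IH[OF b] b Suc.prems assms(2,5) by (simp add: run_Suc gen) (auto simp: run_shift_def)
  qed
qed

lemma pair_factor_values:
  assumes "2 \<le> n" "1 \<le> p" "p < q" "q \<le> n"
  defines "F \<equiv> wordprod n (pair_factor n p q)"
  shows "\<And>y. y \<in> {1..n} \<Longrightarrow> y \<noteq> p \<Longrightarrow> y \<noteq> q \<Longrightarrow> F y = (if y < p then y else if y < q then y - 1 else y - 2)"
    and "F p = 2*n" and "F q = 2*n - 1"
    and "\<And>a. q < a \<Longrightarrow> a \<le> n \<Longrightarrow> F (n + a) = n + a - 2"
proof -
  have Q: "wordprod n (run (n-1) q) y = run_shift (n-1) q y"
    "wordprod n (run (n-1) q) (n + y) = n + run_shift (n-1) q y" if "y \<in> {1..n}" for y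
    using wordprod_run[of n q "n - 1" y] assms(1-4) that by auto
  have P: "wordprod n (run (n-2) p) y = run_shift (n-2) p y"
    "wordprod n (run (n-2) p) (n + y) = n + run_shift (n-2) p y" if "y \<in> {1..n}" for y
    using wordprod_run[of n p "n - 2" y] assms(1-4) that by auto
  have F: "F z = gen n n (wordprod n (run (n-2) p) (wordprod n (run (n-1) q) z))" for z
    unfolding F_def pair_factor_def by (simp add: wordprod_append)
  note g = gen_apply_last[OF assms(1)]
  show "F y = (if y < p then y else if y < q then y - 1 else y - 2)"
    if y: "y \<in> {1..n}" "y \<noteq> p" "y \<noteq> q" for y
  proof -
    define z where "z = (if y < q then y else y - 1)"
    have a: "wordprod n (run (n-1) q) y = z" using Q(1)[OF y(1)] y assms unfolding run_shift_def z_def by auto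
    have z: "z \<in> {1..n}" using y assms unfolding z_def by auto
    define z' where "z' = (if y < p then y else if y < q then y - 1 else y - 2)"
    have b: "wordprod n (run (n-2) p) z = z'" using P(1)[OF z] y assms unfolding run_shift_def z_def z'_def by auto
    have "z' \<le> n - 2" "1 \<le> z'" using y assms unfolding z'_def by auto
    then have "gen n n z' = z'" unfolding g by auto
    then show ?thesis using F a b z'_def by simp
  qed
  show "F p = 2*n"
  proof -
    have "wordprod n (run (n-1) q) p = p" using Q(1)[of p] assms by (simp add: run_shift_def)
    moreover have "wordprod n (run (n-2) p) p = n - 1" using P(1)[of p] assms by (simp add: run_shift_def)
    moreover have "gen n n (n - 1) = 2 * n" unfolding g using assms(1) by auto
    ultimately show ?thesis using F by simp
  qed
  show "F q = 2*n - 1"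
  proof -
    have "wordprod n (run (n-1) q) q = n" using Q(1)[of q] assms by (simp add: run_shift_def)
    moreover have "wordprod n (run (n-2) p) n = n" using P(1)[of n] assms by (simp add: run_shift_def)
    moreover have "gen n n n = 2 * n - 1" unfolding g by simp
    ultimately show ?thesis using F by simp
  qed
  show "F (n + a) = n + a - 2" if a: "q < a" "a \<le> n" for a
  proof -
    have "wordprod n (run (n-1) q) (n + a) = n + (a - 1)" using Q(2)[of a] assms a by (simp add: run_shift_def)
    moreover have "wordprod n (run (n-2) p) (n + (a - 1)) = n + (a - 2)"
    proof -
      have "a - 1 \<in> {1..n}" "run_shift (n-2) p (a - 1) = a - 2"
        using assms(1-4) a by (auto simp: run_shift_def)
      then show ?thesis using P(2) by simp
    qed
    moreover have "gen n n (n + (a - 2)) = n + (a - 2)" unfolding g using assms a by auto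
    ultimately show ?thesis using F a assms by simp
  qed
qed

definition pair_values :: "nat \<Rightarrow> nat list \<Rightarrow> (nat \<Rightarrow> nat) \<Rightarrow> bool" where
  "pair_values n ys W \<longleftrightarrow>
     (\<forall>j\<in>{1..n}. j \<notin> set ys \<longrightarrow> W j = j - card {y\<in>set ys. y < j}) \<and>
     (\<forall>j\<in>set ys. 2*n - length ys < W j \<and> W j \<le> 2*n)"

lemma pair_values_Cons_outside:
  assumes "2 \<le> n" "1 \<le> p" "p < q" "q \<le> n" "\<forall>y\<in>set rest. q < y"
    and W: "pair_values n rest W" and j: "j \<in> {1..n}" "j \<notin> set (p # q # rest)"
  shows "(wordprod n (pair_factor n p q) \<circ> W) j = j - card {y\<in>set (p # q # rest). y < j}"
proof -
  note FV = pair_factor_values[OF assms(1-4)]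
  have Wj: "W j = j - card {y\<in>set rest. y < j}" using W j by (simp add: pair_values_def)
  consider "j < p" | "p < j" "j < q" | "q < j" using j(2) by fastforce
  then show ?thesis
  proof cases
    case 1
    then have e: "{y\<in>set (p # q # rest). y < j} = {}" "{y\<in>set rest. y < j} = {}"
      using assms(3,5) by auto
    have "W j = j" using Wj by (simp only: e card.empty diff_zero)
    then show ?thesis using FV(1)[OF j(1)] j(2) 1 by (simp only: e card.empty diff_zero) simp
  next
    case 2
    then have e: "{y\<in>set (p # q # rest). y < j} = {p}" "{y\<in>set rest. y < j} = {}"
      using assms(5) by auto
    have "W j = j" using Wj by (simp only: e card.empty diff_zero)
    then show ?thesis using FV(1)[OF j(1)] j(2) 2 by (simp only: e) simp
  next
    case 3
    let ?c = "card {y\<in>set rest. y < j}"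
    have "{y\<in>set rest. y < j} \<subseteq> {q<..<j}" using assms(5) by auto
    then have "?c \<le> j - q - 1" using card_mono[of "{q<..<j}"] by fastforce
    then have Wj': "W j \<in> {1..n}" "W j \<noteq> p" "W j \<noteq> q" "\<not> W j < q" using Wj 3 j(1) assms(3) by auto
    have "{y\<in>set (p # q # rest). y < j} = insert p (insert q {y\<in>set rest. y < j})"
      using 3 assms(3) by auto
    moreover have "p \<notin> set rest" "q \<notin> set rest" using assms(3,5) by auto
    ultimately have "card {y\<in>set (p # q # rest). y < j} = ?c + 2" using assms(3) by simp
    then show ?thesis using FV(1)[OF Wj'(1-3)] Wj'(4) Wj assms(3) by simp
  qed
qed

lemma pair_values_Cons_inside:
  assumes "2 \<le> n" "1 \<le> p" "p < q" "q \<le> n" "\<forall>y\<in>set rest. q < y" "length rest \<le> n - q"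
    and W: "pair_values n rest W" and j: "j \<in> set (p # q # rest)"
  shows "2*n - length (p # q # rest) < (wordprod n (pair_factor n p q) \<circ> W) j
         \<and> (wordprod n (pair_factor n p q) \<circ> W) j \<le> 2*n"
proof -
  note FV = pair_factor_values[OF assms(1-4)]
  consider "j = p" | "j = q" | "j \<in> set rest" using j by auto
  then show ?thesis
  proof cases
    case 1
    have "p \<notin> set rest" "p \<in> {1..n}" and e: "{y\<in>set rest. y < p} = {}" using assms(2-5) by auto
    then have "W p = p - card {y\<in>set rest. y < p}" using W by (simp add: pair_values_def)
    then have "W p = p" by (simp only: e card.empty diff_zero)
    then show ?thesis using 1 FV(2) assms(1) by simp
  next
    case 2
    have "q \<notin> set rest" "q \<in> {1..n}" and e: "{y\<in>set rest. y < q} = {}" using assms(2-5) by auto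
    then have "W q = q - card {y\<in>set rest. y < q}" using W by (simp add: pair_values_def)
    then have "W q = q" by (simp only: e card.empty diff_zero)
    then show ?thesis using 2 FV(3) assms(1) by simp
  next
    case 3
    then have Wj: "2*n - length rest < W j" "W j \<le> 2*n" using W by (auto simp: pair_values_def)
    define a where "a = W j - n"
    have a: "q < a" "a \<le> n" "W j = n + a" using Wj assms(6) assms(4) unfolding a_def by auto
    then show ?thesis using FV(4)[OF a(1,2)] Wj assms(2,3,6) by simp linarith
  qed
qed

lemma pair_values_word_of_pairs:
  "2 \<le> n \<Longrightarrow> sorted_wrt (<) ys \<Longrightarrow> set ys \<subseteq> {1..n} \<Longrightarrow> even (length ys) \<Longrightarrow>
   pair_values n ys (wordprod n (word_of_pairs n ys))"
proof (induction n ys rule: word_of_pairs.induct)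
  case (1 n p q rest)
  have pq: "p < q" "\<forall>y\<in>set rest. q < y" using "1.prems"(2) by auto
  have range: "1 \<le> p" "q \<le> n" "set rest \<subseteq> {1..n}" using "1.prems"(3) by auto
  have "length rest \<le> n - q"
  proof -
    have "set rest \<subseteq> {q<..n}" using pq(2) range(3) by auto
    then have "card (set rest) \<le> n - q" using card_mono[of "{q<..n}"] by fastforce
    then show ?thesis using "1.prems"(2) by (simp add: distinct_card strict_sorted_iff)
  qed
  moreover have "pair_values n rest (wordprod n (word_of_pairs n rest))"
    using "1.IH" "1.prems" by simp
  ultimately show ?case
    using pair_values_Cons_outside[OF "1.prems"(1) range(1) pq(1) range(2) pq(2)]
      pair_values_Cons_inside[OF "1.prems"(1) range(1) pq(1) range(2) pq(2)]
    by (simp add: pair_values_def wordprod_append)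
qed (simp_all add: pair_values_def)

lemma length_word_of_pairs:
  "2 \<le> n \<Longrightarrow> sorted_wrt (<) ys \<Longrightarrow> set ys \<subseteq> {1..n} \<Longrightarrow> even (length ys) \<Longrightarrow>
   length (word_of_pairs n ys) = (\<Sum>j\<in>set ys. n - j)"
proof (induction n ys rule: word_of_pairs.induct)
  case (1 n p q rest)
  have "p < q" "p \<notin> set rest" "q \<notin> set rest" "1 \<le> p" "q \<le> n" using "1.prems"(2,3) by auto
  then show ?case using "1.IH" "1.prems" by (simp add: pair_factor_def length_run)
qed simp_all

lemma set_word_of_pairs: "2 \<le> n \<Longrightarrow> set ys \<subseteq> {1..n} \<Longrightarrow> set (word_of_pairs n ys) \<subseteq> {1..n}"
  by (induction n ys rule: word_of_pairs.induct) (auto simp: pair_factor_def set_run)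

lemma concat_pair_factors:
  "concat (map (\<lambda>m. pair_factor n (ys ! (2*m-1-1)) (ys ! (2*m-1))) [1..<Suc (length ys div 2)])
     = word_of_pairs n ys"
proof (induction n ys rule: word_of_pairs.induct)
  case (1 n p q rest)
  let ?f = "\<lambda>ys m. pair_factor n (ys ! (2*m-1-1)) (ys ! (2*m-1))"
  let ?ms = "[1..<Suc (length rest div 2)]"
  have ms: "[1..<Suc (length (p # q # rest) div 2)] = 1 # map Suc ?ms"
    by (simp add: map_Suc_upt upt_conv_Cons)
  have shift: "map (?f (p # q # rest) \<circ> Suc) ?ms = map (?f rest) ?ms"
  proof (rule map_cong[OF refl])
    fix m assume "m \<in> set ?ms"
    then have "2 * Suc m - 1 - 1 = Suc (Suc (2*m-1-1))" "2 * Suc m - 1 = Suc (Suc (2*m-1))" by auto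
    then show "(?f (p # q # rest) \<circ> Suc) m = ?f rest m" by (simp only: comp_apply nth_Cons_Suc)
  qed
  have "concat (map (?f (p # q # rest)) [1..<Suc (length (p # q # rest) div 2)])
      = ?f (p # q # rest) 1 @ concat (map (?f (p # q # rest) \<circ> Suc) ?ms)"
    unfolding ms by simp
  also have "\<dots> = pair_factor n p q @ word_of_pairs n rest"
    unfolding shift "1.IH" by simp
  finally show ?case by simp
qed simp_all

lemma wordI_eq_word_of_pairs:
  assumes "finite I"
  shows "wordI n I = word_of_pairs n (sorted_list_of_set I)"
  unfolding wordI_def factorI_def ielem_def pair_factor_def[symmetric]
  using concat_pair_factors[of n "sorted_list_of_set I"] assms by simp

lemma wordprod_wordI:
  assumes "2 \<le> n" "I \<subseteq> {1..n}" "even (card I)"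
  defines "w \<equiv> wordprod n (wordI n I)"
  shows "is_word n (wordI n I)" and "signed_perm n w" and "negset n w = I"
    and "length (wordI n I) = (\<Sum>j\<in>I. n - j)"
proof -
  have fin: "finite I" using assms(2) finite_subset by blast
  define ys where "ys = sorted_list_of_set I"
  have ys: "sorted_wrt (<) ys" "set ys = I" "length ys = card I"
    unfolding ys_def using fin by (auto simp: strict_sorted_list_of_set)
  have ys': "set ys \<subseteq> {1..n}" "even (length ys)" using ys assms(2,3) by auto
  have word: "wordI n I = word_of_pairs n ys" unfolding ys_def by (rule wordI_eq_word_of_pairs[OF fin])
  show word_ok: "is_word n (wordI n I)"
    unfolding word is_word_def by (rule set_word_of_pairs[OF assms(1) ys'(1)])
  show sp: "signed_perm n w"
    unfolding w_def using word_ok signed_perm_wordprod[OF assms(1)] by (simp add: is_word_def)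
  show "length (wordI n I) = (\<Sum>j\<in>I. n - j)"
    unfolding word using length_word_of_pairs[OF assms(1) ys(1) ys'] ys(2) by simp
  have vals: "pair_values n ys w"
    unfolding w_def word by (rule pair_values_word_of_pairs[OF assms(1) ys(1) ys'])
  have "card I \<le> n" using card_mono[OF _ assms(2)] by simp
  show "negset n w = I"
  proof (intro set_eqI iffI)
    fix j assume "j \<in> negset n w"
    then have j: "j \<in> {1..n}" "n < w j" by (auto simp: negset_def)
    show "j \<in> I"
    proof (rule ccontr)
      assume "j \<notin> I"
      then have "w j = j - card {y\<in>set ys. y < j}" using vals j(1) ys(2) by (simp add: pair_values_def)
      with j show False by simp linarith
    qed
  next
    fix j assume "j \<in> I"
    then have "2*n - card I < w j" using vals ys by (simp add: pair_values_def)
    then show "j \<in> negset n w" using \<open>j \<in> I\<close> \<open>card I \<le> n\<close> assms(2) by (auto simp: negset_def)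
  qed
qed

lemma reduced_if_length_le_total_weight:
  assumes "2 \<le> n" "is_word n xs" "length xs \<le> total_weight n (wordprod n xs)"
  shows "reduced_expr n xs (wordprod n xs)"
  using total_weight_le_wlen[OF assms(1,2) refl] wlen_le_length[OF assms(2)] assms(2,3)
  unfolding reduced_expr_def by simp

lemma wordprod_wordI_reduced:
  assumes "2 \<le> n" "I \<subseteq> {1..n}" "even (card I)"
  shows "reduced_expr n (wordI n I) (wordprod n (wordI n I))"
    and "sign_sorted n (wordprod n (wordI n I))"
proof -
  note w = wordprod_wordI[OF assms]
  have weight: "total_weight n (wordprod n (wordI n I)) = (\<Sum>j\<in>I. n - j)"
    using negset_sum_le_total_weight[of n "wordprod n (wordI n I)"]
      total_weight_wordprod_le[OF assms(1), of "wordI n I"] w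
    unfolding is_word_def by simp
  show "reduced_expr n (wordI n I) (wordprod n (wordI n I))"
    using reduced_if_length_le_total_weight[OF assms(1) w(1)] weight w(4) by simp
  show "sign_sorted n (wordprod n (wordI n I))"
    using sign_sorted_if_total_weight_eq[OF w(2)] weight w(3) by simp
qed

lemma negset_sum_less_wlen:
  assumes "2 \<le> n" "signed_perm n u" "signed_perm n w" "negset n u = negset n w" "sign_sorted n w"
    and "u \<noteq> w" "is_word n xs" "wordprod n xs = u"
  shows "(\<Sum>j\<in>negset n u. n - j) < wlen n u"
proof -
  have "total_weight n u \<noteq> (\<Sum>j\<in>negset n u. n - j)"
    using sign_sorted_if_total_weight_eq[OF assms(2)] sign_sorted_unique[OF assms(2,3,4) _ assms(5)]
      assms(6) by blast
  then have "(\<Sum>j\<in>negset n u. n - j) < total_weight n u"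
    using negset_sum_le_total_weight[of n u] by simp
  also have "\<dots> \<le> wlen n u" by (rule total_weight_le_wlen[OF assms(1,7,8)])
  finally show ?thesis .
qed

lemma negset_parabolic_comp:
  assumes "2 \<le> n" "signed_perm n u" "set ys \<subseteq> {1..n-1}"
  shows "negset n (wordprod n ys \<circ> u) = negset n u"
  using assms(3)
proof (induction ys)
  case (Cons i ys)
  then have i: "i \<in> {1..n}" "i \<noteq> n" using assms(1) by auto
  have ys: "set ys \<subseteq> {1..n}" using Cons.prems by fastforce
  have "negset n (gen n i \<circ> (wordprod n ys \<circ> u)) = negset n (wordprod n ys \<circ> u)"
    using negset_gen[OF assms(1) i(1) signed_perm_wordprod_comp[OF assms(1) ys assms(2)]] i(2)
    by (simp add: negset_def)
  also have "\<dots> = negset n u" by (rule Cons.IH) (use Cons.prems in simp)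
  finally show ?case by (simp only: wordprod_Cons comp_assoc)
qed simp

lemma rcoset_elem:
  assumes "v \<in> rcoset n w"
  obtains ys where "set ys \<subseteq> {1..n-1}" "v = wordprod n ys \<circ> w"
  using assms unfolding rcoset_def Wpar_def by blast

lemma subseq_run: "b' \<le> b \<Longrightarrow> subseq (run a b) (run a b')"
proof (cases "b \<le> Suc a")
  case True
  assume "b' \<le> b"
  with True have "run a b' = run a b @ rev [b'..<b]"
    using upt_add_eq_append[of b' b "Suc a - b"] by (simp add: run_def)
  then show ?thesis using prefix_imp_subseq[of "run a b" "run a b'"] by simp
qed (simp add: run_def)

lemma subseq_pair_factor: "p' \<le> p \<Longrightarrow> q' \<le> q \<Longrightarrow> subseq (pair_factor n p q) (pair_factor n p' q')"
  unfolding pair_factor_def by (intro list_emb_append_mono subseq_run list_emb.intros(3)) simp_all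

lemma sorted_nth_ge:
  assumes "sorted_wrt (<) xs" "set xs \<subseteq> {1..}" "i < length xs"
  shows "i + 1 \<le> xs ! i"
  using assms(3)
proof (induction i)
  case 0
  then have "xs ! 0 \<in> set xs" by simp
  then show ?case using assms(2) by auto
next
  case (Suc i)
  then show ?case using sorted_wrt_nth_less[OF assms(1), of i "Suc i"] by simp
qed

lemma ielem_ge:
  assumes "finite I" "I \<subseteq> {1..}" "j \<in> {1..card I}"
  shows "j \<le> ielem I j"
proof -
  have "j - 1 + 1 \<le> sorted_list_of_set I ! (j - 1)"
    by (rule sorted_nth_ge) (use assms in auto)
  then show ?thesis using assms(3) by (simp add: ielem_def)
qed

lemma subseq_factorI_groupL:
  assumes "finite I" "I \<subseteq> {1..}" "m \<in> {1..card I div 2}"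
  shows "subseq (factorI n I m) (groupL n m)"
  unfolding factorI_def groupL_def pair_factor_def[symmetric]
proof (rule subseq_pair_factor)
  have "1 \<le> m" "m \<le> card I div 2" using assms(3) by auto
  then have "2*m - 1 \<in> {1..card I}" "2*m \<in> {1..card I}" by auto
  then show "2*m - 1 \<le> ielem I (2*m - 1)" "2*m \<le> ielem I (2*m)"
    using ielem_ge[OF assms(1,2)] by blast+
qed

lemma subseq_concat_map:
  "(\<And>m. m \<in> set ms \<Longrightarrow> subseq (f m) (g m)) \<Longrightarrow> subseq (concat (map f ms)) (concat (map g ms))"
  by (induction ms) (auto intro: list_emb_append_mono)

lemma subseq_wordI_wordLong:
  assumes "finite I" "I \<subseteq> {1..}" "card I div 2 \<le> n div 2"
  shows "subseq (wordI n I) (wordLong n)"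
proof -
  let ?r = "card I div 2"
  have split: "[1..<Suc (n div 2)] = [1..<Suc ?r] @ [Suc ?r..<Suc (n div 2)]"
    using upt_add_eq_append[of 1 "Suc ?r" "n div 2 - ?r"] assms(3) by simp
  have "subseq (concat (map (factorI n I) [1..<Suc ?r])) (concat (map (groupL n) [1..<Suc ?r]))"
    by (rule subseq_concat_map) (use subseq_factorI_groupL[OF assms(1,2)] in auto)
  then show ?thesis
    unfolding wordI_def wordLong_def split map_append concat_append by (rule list_emb_prefix)
qed

theorem lemma4:
  fixes n :: nat and I :: "nat set"
  assumes "n \<ge> 2" and "I \<subseteq> {1..n}" and "even (card I)"
  shows "let w = wordprod n (wordI n I) in
           inW n w \<and> negset n w = I
         \<and> (\<forall>u. inW n u \<and> negset n u = I \<and> u \<noteq> w \<longrightarrow> wlen n w < wlen n u)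
         \<and> reduced_expr n (wordI n I) w
         \<and> (\<forall>v\<in>rcoset n w. v \<noteq> w \<longrightarrow> wlen n w < wlen n v)
         \<and> card I div 2 \<le> n div 2
         \<and> (\<forall>m\<in>{1..card I div 2}. subseq (factorI n I m) (groupL n m))
         \<and> subseq (wordI n I) (wordLong n)"
proof -
  define w where "w = wordprod n (wordI n I)"
  note w = wordprod_wordI[OF assms, folded w_def]
  note reduced = wordprod_wordI_reduced[OF assms, folded w_def]
  have shorter: "wlen n w < wlen n u"
    if "signed_perm n u" "negset n u = I" "u \<noteq> w" "is_word n xs" "wordprod n xs = u" for u xs
    using negset_sum_less_wlen[OF assms(1) that(1) w(2) _ reduced(2) that(3-5)] that(2) w(3,4) reduced(1)
    by (simp add: reduced_expr_def)
  have coset: "wlen n w < wlen n v" if v: "v \<in> rcoset n w" "v \<noteq> w" for v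
  proof -
    obtain ys where ys: "set ys \<subseteq> {1..n-1}" "v = wordprod n ys \<circ> w"
      using v(1) by (rule rcoset_elem)
    then have "set ys \<subseteq> {1..n}" by fastforce
    then show ?thesis
      using shorter[of v "ys @ wordI n I"] v(2) ys w(1,2,3) signed_perm_wordprod_comp[OF assms(1)]
        negset_parabolic_comp[OF assms(1) w(2) ys(1)]
      by (simp add: is_word_def wordprod_append w_def)
  qed
  have fin: "finite I" and pos: "I \<subseteq> {1..}" using assms(2) finite_subset by auto
  have "card I div 2 \<le> n div 2" using card_mono[OF _ assms(2)] by (simp add: div_le_mono)
  then show ?thesis
    unfolding Let_def w_def[symmetric]
    using w(2,3) assms(3) inW_iff_signed_perm inW_imp_word[OF assms(1)] shorter reduced(1) coset
      subseq_factorI_groupL[OF fin pos] subseq_wordI_wordLong[OF fin pos]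
    by blast
qed

end
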